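(* Every metric space $X$ with finite APC-decomposition complexity has straight finite decomposition complexity (i.e. the family $\{X\}$ has straight finite decomposition complexity).
   Context: A family $\mathcal{U}$ of metric subspaces of $(X,d)$ is $r$-disjoint if $d(x,y)>r$ whenever $x\in U$, $y\in U'$, $U\neq U'$ in $\mathcal{U}$. For families $\mathcal{X},\mathcal{Y}$ and $R\in\mathbb{R}^{\mathbb{N}}$, $\mathcal{X}\xrightarrow{R}\mathcal{Y}$ means: there is an integer $k$ such that for each $X\in\mathcal{X}$ there are subcollections $\mathcal{U}_1,\dots,\mathcal{U}_k\subseteq\mathcal{Y}$ of subspaces of $X$, each $\mathcal{U}_i$ being $R_i$-disjoint, with $\bigcup_i\mathcal{U}_i$ covering $X$. A family is bounded if the diameters of its members are uniformly bounded. $\mathfrak{C}_0$ is the class of bounded families; for an ordinal $\alpha>0$, $\mathfrak{C}_\alpha$ is the class of families $\mathcal{X}$ such that for every $R\in\mathbb{R}^{\mathbb{N}}$ there exist $\beta<\alpha$ and $\mathcal{Y}\in\mathfrak{C}_\beta$ with $\mathcal{X}\xrightarrow{R}\mathcal{Y}$. A metric space has finite APC-decomposition complexity if it is a member of some family belonging to $\mathfrak{C}_\alpha$ for some ordinal $\alpha$. For $r>0$, a family $\mathcal{X}$ is $r$-decomposable over a family $\mathcal{Y}$ if every $X\in\mathcal{X}$ can be written as $X=X_0\cup X_1$ where each $X_j$ is the union of an $r$-disjoint collection of subspaces, each belonging to $\mathcal{Y}$. A family $\mathcal{X}$ has straight finite decomposition complexity if for every $(R_i)_{i\in\mathbb{N}}\in\mathbb{R}^{\mathbb{N}}$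 there exist $k\in\mathbb{N}$ and families $\mathcal{X}_1,\dots,\mathcal{X}_k$ such that, with $\mathcal{X}_0=\mathcal{X}$, $\mathcal{X}_{i-1}$ is $R_i$-decomposable over $\mathcal{X}_i$ for every $i\in\{1,\dots,k\}$, and $\mathcal{X}_k$ is bounded. *)

theory Defs
  imports "HOL-Analysis.Analysis"
begin

text \<open>Metric spaces are modelled as subsets of a fixed ambient metric space (M,d);
 a family of metric spaces is a set of subsets of M (each with the restricted metric).\<close>

definition r_disjoint :: "('a \<Rightarrow> 'a \<Rightarrow> real) \<Rightarrow> real \<Rightarrow> 'a set set \<Rightarrow> bool" where
  "r_disjoint d r \<U> \<longleftrightarrow>
     (\<forall>U\<in>\<U>. \<forall>U'\<in>\<U>. U \<noteq> U' \<longrightarrow> (\<forall>x\<in>U. \<forall>y\<in>U'. d x y > r))"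

definition bounded_family :: "('a \<Rightarrow> 'a \<Rightarrow> real) \<Rightarrow> 'a set set \<Rightarrow> bool" where
  "bounded_family d \<X> \<longleftrightarrow> (\<exists>B. \<forall>X\<in>\<X>. \<forall>x\<in>X. \<forall>y\<in>X. d x y \<le> B)"

text \<open>X -R-> Y; sequences R are indexed from 1, i.e. R_i = R i.\<close>
definition decomp_arrow :: "('a \<Rightarrow> 'a \<Rightarrow> real) \<Rightarrow> 'a set set \<Rightarrow> (nat \<Rightarrow> real) \<Rightarrow> 'a set set \<Rightarrow> bool" where
  "decomp_arrow d \<X> R \<Y> \<longleftrightarrow>
     (\<exists>k::nat. \<forall>X\<in>\<X>. \<exists>\<U> :: nat \<Rightarrow> 'a set set.
        (\<forall>i\<in>{1..k}. \<U> i \<subseteq> \<Y> \<and> (\<forall>V\<in>\<U> i. V \<subseteq> X) \<and> r_disjoint d (R i) (\<U> i))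
        \<and> \<Union>(\<Union>i\<in>{1..k}. \<U> i) = X)"

text \<open>APC d M \<X> holds iff \<X> belongs to \<C>_\<alpha> for some ordinal \<alpha>:
 the union over all ordinals of the transfinite hierarchy is the least class containing
 the bounded families and closed under the successor step.\<close>
inductive APC :: "'a set \<Rightarrow> ('a \<Rightarrow> 'a \<Rightarrow> real) \<Rightarrow> 'a set set \<Rightarrow> bool"
  for M d where
  bounded: "\<X> \<subseteq> Pow M \<Longrightarrow> bounded_family d \<X> \<Longrightarrow> APC M d \<X>"
| step: "\<X> \<subseteq> Pow M \<Longrightarrow>
         (\<And>R::nat \<Rightarrow> real. \<exists>\<Y>. \<Y> \<subseteq> Pow M \<and> APC M d \<Y> \<and> decomp_arrow d \<X> R \<Y>)
         \<Longrightarrow> APC M d \<X>"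

definition finite_APC_complexity :: "'a set \<Rightarrow> ('a \<Rightarrow> 'a \<Rightarrow> real) \<Rightarrow> 'a set \<Rightarrow> bool" where
  "finite_APC_complexity M d X \<longleftrightarrow> (\<exists>\<X>. \<X> \<subseteq> Pow M \<and> X \<in> \<X> \<and> APC M d \<X>)"

definition r_decomposable :: "('a \<Rightarrow> 'a \<Rightarrow> real) \<Rightarrow> real \<Rightarrow> 'a set set \<Rightarrow> 'a set set \<Rightarrow> bool" where
  "r_decomposable d r \<X> \<Y> \<longleftrightarrow>
     (\<forall>X\<in>\<X>. \<exists>X0 X1. X = X0 \<union> X1 \<and>
        (\<exists>\<U>. \<U> \<subseteq> \<Y> \<and> r_disjoint d r \<U> \<and> X0 = \<Union>\<U>) \<and>
        (\<exists>\<U>. \<U> \<subseteq> \<Y> \<and> r_disjoint d r \<U> \<and> X1 = \<Union>\<U>))"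

definition straight_FDC :: "'a set \<Rightarrow> ('a \<Rightarrow> 'a \<Rightarrow> real) \<Rightarrow> 'a set set \<Rightarrow> bool" where
  "straight_FDC M d \<X> \<longleftrightarrow>
     (\<forall>R::nat \<Rightarrow> real. \<exists>k::nat. \<exists>F :: nat \<Rightarrow> 'a set set.
        F 0 = \<X> \<and> (\<forall>i\<le>k. F i \<subseteq> Pow M) \<and>
        (\<forall>i\<in>{1..k}. r_decomposable d (R i) (F (i - 1)) (F i)) \<and>
        bounded_family d (F k))"

end

theory Submission
  imports Defs
begin

text \<open>If every member of \<X> is covered by k families from \<Y> that are R 1-, ..., R k-disjoint,
  split off the first family and keep the union of the other k - 1 as a single set; a single
  set is trivially r-disjoint. Thus \<X> is R 1-decomposable over the sets covered by k - 1
  families, and after k such steps one reaches \<Y>. By induction along the APC hierarchy,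
  every family of finite APC-decomposition complexity therefore has straight finite
  decomposition complexity, and so does each of its subfamilies, in particular {X}.\<close>

definition straight_decomposable ::
    "'a set \<Rightarrow> ('a \<Rightarrow> 'a \<Rightarrow> real) \<Rightarrow> (nat \<Rightarrow> real) \<Rightarrow> 'a set set \<Rightarrow> bool" where
  "straight_decomposable M d R \<X> \<longleftrightarrow> (\<exists>k::nat. \<exists>F :: nat \<Rightarrow> 'a set set.
        F 0 = \<X> \<and> (\<forall>i\<le>k. F i \<subseteq> Pow M) \<and>
        (\<forall>i\<in>{1..k}. r_decomposable d (R i) (F (i - 1)) (F i)) \<and>
        bounded_family d (F k))"

lemma straight_FDC_iff: "straight_FDC M d \<X> \<longleftrightarrow> (\<forall>R. straight_decomposable M d R \<X>)"
  unfolding straight_FDC_def straight_decomposable_def ..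

lemma r_disjoint_singleton: "r_disjoint d r {U}"
  unfolding r_disjoint_def by simp

lemma r_decomposable_subset:
  "r_decomposable d r \<X> \<Y> \<Longrightarrow> \<X>' \<subseteq> \<X> \<Longrightarrow> r_decomposable d r \<X>' \<Y>"
  unfolding r_decomposable_def by blast

lemma bounded_family_subset: "bounded_family d \<X> \<Longrightarrow> \<X>' \<subseteq> \<X> \<Longrightarrow> bounded_family d \<X>'"
  unfolding bounded_family_def by blast

lemma straight_decomposable_bounded:
  "\<X> \<subseteq> Pow M \<Longrightarrow> bounded_family d \<X> \<Longrightarrow> straight_decomposable M d R \<X>"
  unfolding straight_decomposable_def by (intro exI[of _ 0] exI[of _ "\<lambda>_. \<X>"]) auto

lemma straight_decomposable_Cons:
  assumes "r_decomposable d (R 1) \<X> \<Y>" and "\<X> \<subseteq> Pow M"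
    and "straight_decomposable M d (\<lambda>i. R (Suc i)) \<Y>"
  shows "straight_decomposable M d R \<X>"
proof -
  obtain k F where F0: "F 0 = \<Y>" and FM: "\<forall>i\<le>k. F i \<subseteq> Pow M"
    and Fdec: "\<forall>i\<in>{1..k}. r_decomposable d (R (Suc i)) (F (i - 1)) (F i)"
    and Fk: "bounded_family d (F k)"
    using assms(3) unfolding straight_decomposable_def by (elim exE conjE) blast
  define G where "G = case_nat \<X> F"
  have "G i \<subseteq> Pow M" if "i \<le> Suc k" for i
    using that FM assms(2) by (cases i) (simp_all add: G_def)
  moreover have "r_decomposable d (R i) (G (i - 1)) (G i)" if "i \<in> {1..Suc k}" for i
  proof -
    obtain j where i: "i = Suc j" and "j \<le> k" using \<open>i \<in> {1..Suc k}\<close> by (cases i) auto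
    show ?thesis
    proof (cases j)
      case 0
      then show ?thesis using assms(1) F0 i by (simp add: G_def)
    next
      case (Suc j')
      then have "j \<in> {1..k}" using \<open>j \<le> k\<close> by simp
      with Fdec have "r_decomposable d (R (Suc j)) (F (j - 1)) (F j)" by blast
      then show ?thesis using i Suc by (simp add: G_def)
    qed
  qed
  moreover have "G 0 = \<X>" "bounded_family d (G (Suc k))" using Fk by (simp_all add: G_def)
  ultimately show ?thesis
    unfolding straight_decomposable_def
    by (intro exI[of _ "Suc k"] exI[of _ G] conjI allI impI ballI) simp_all
qed

lemma straight_decomposable_subset:
  assumes "straight_decomposable M d R \<X>" and "\<X>' \<subseteq> \<X>"
  shows "straight_decomposable M d R \<X>'"
proof -
  obtain k F where F0: "F 0 = \<X>" and FM: "\<forall>i\<le>k. F i \<subseteq> Pow M"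
    and Fdec: "\<forall>i\<in>{1..k}. r_decomposable d (R i) (F (i - 1)) (F i)"
    and Fk: "bounded_family d (F k)"
    using assms(1) unfolding straight_decomposable_def by (elim exE conjE) blast
  define G where "G = F(0 := \<X>')"
  have GF: "G i \<subseteq> F i" for i using F0 assms(2) by (simp add: G_def)
  have "\<forall>i\<le>k. G i \<subseteq> Pow M" using FM GF by blast
  moreover have "r_decomposable d (R i) (G (i - 1)) (G i)" if "i \<in> {1..k}" for i
  proof -
    have "r_decomposable d (R i) (F (i - 1)) (F i)" using Fdec that by blast
    moreover have "G i = F i" using that by (simp add: G_def)
    ultimately show ?thesis using GF r_decomposable_subset by metis
  qed
  moreover have "bounded_family d (G k)" using Fk GF by (rule bounded_family_subset)
  moreover have "G 0 = \<X>'" by (simp add: G_def)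
  ultimately show ?thesis
    unfolding straight_decomposable_def by (intro exI[of _ k] exI[of _ G] conjI ballI) simp_all
qed

definition covered_by ::
    "('a \<Rightarrow> 'a \<Rightarrow> real) \<Rightarrow> (nat \<Rightarrow> real) \<Rightarrow> nat \<Rightarrow> 'a set set \<Rightarrow> 'a set \<Rightarrow> bool" where
  "covered_by d R k \<Y> X \<longleftrightarrow> (\<exists>\<U> :: nat \<Rightarrow> 'a set set.
      (\<forall>i\<in>{1..k}. \<U> i \<subseteq> \<Y> \<and> r_disjoint d (R i) (\<U> i)) \<and> \<Union>(\<Union>i\<in>{1..k}. \<U> i) = X)"

lemma covered_by_Pow: "covered_by d R k \<Y> X \<Longrightarrow> \<Y> \<subseteq> Pow M \<Longrightarrow> X \<in> Pow M"
  unfolding covered_by_def by blast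

lemma covered_by_Suc: "covered_by d R k \<Y> X \<Longrightarrow> covered_by d R (Suc k) \<Y> X"
proof -
  assume "covered_by d R k \<Y> X"
  then obtain \<U> where \<U>: "\<forall>i\<in>{1..k}. \<U> i \<subseteq> \<Y> \<and> r_disjoint d (R i) (\<U> i)"
    and X: "\<Union>(\<Union>i\<in>{1..k}. \<U> i) = X"
    unfolding covered_by_def by blast
  define \<U>' where "\<U>' = \<U>(Suc k := {})"
  have "(\<Union>i\<in>{1..Suc k}. \<U>' i) = (\<Union>i\<in>{1..k}. \<U> i)"
  proof -
    have "{1..Suc k} = insert (Suc k) {1..k}" by auto
    moreover have "(\<Union>i\<in>{1..k}. \<U>' i) = (\<Union>i\<in>{1..k}. \<U> i)"
      by (rule SUP_cong) (simp_all add: \<U>'_def)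
    ultimately show ?thesis by (simp only: UN_insert) (simp add: \<U>'_def)
  qed
  moreover have "\<forall>i\<in>{1..Suc k}. \<U>' i \<subseteq> \<Y> \<and> r_disjoint d (R i) (\<U>' i)"
    using \<U> by (auto simp: \<U>'_def r_disjoint_def)
  ultimately show ?thesis unfolding covered_by_def using X by metis
qed

lemma covered_by_member: "Y \<in> \<Y> \<Longrightarrow> covered_by d R (Suc k) \<Y> Y"
  unfolding covered_by_def
  by (intro exI[of _ "\<lambda>i. if i = 1 then {Y} else {}"]) (auto simp: r_disjoint_def)

lemma covered_by_Suc_split:
  assumes "covered_by d R (Suc k) \<Y> X"
  obtains \<U> Z where "\<U> \<subseteq> \<Y>" "r_disjoint d (R 1) \<U>"
    "covered_by d (\<lambda>i. R (Suc i)) k \<Y> Z" "X = \<Union>\<U> \<union> Z"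
proof -
  obtain \<U> where \<U>: "\<forall>i\<in>{1..Suc k}. \<U> i \<subseteq> \<Y> \<and> r_disjoint d (R i) (\<U> i)"
    and X: "\<Union>(\<Union>i\<in>{1..Suc k}. \<U> i) = X"
    using assms unfolding covered_by_def by blast
  define Z where "Z = \<Union>(\<Union>i\<in>{1..k}. \<U> (Suc i))"
  have "{1..Suc k} = insert 1 (Suc ` {1..k})"
    by (auto simp: image_Suc_atLeastAtMost)
  then have "(\<Union>i\<in>{1..Suc k}. \<U> i) = \<U> 1 \<union> (\<Union>i\<in>{1..k}. \<U> (Suc i))"
    by (simp only: UN_insert image_image)
  then have "X = \<Union>(\<U> 1) \<union> Z" using X by (simp add: Z_def)
  moreover have "covered_by d (\<lambda>i. R (Suc i)) k \<Y> Z"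
    unfolding covered_by_def Z_def using \<U> by (intro exI[of _ "\<lambda>i. \<U> (Suc i)"]) auto
  moreover have "\<U> 1 \<subseteq> \<Y>" "r_disjoint d (R 1) (\<U> 1)" using \<U> by auto
  ultimately show ?thesis using that by blast
qed

text \<open>In the inductive step the intermediate family consists of all sets covered by the
  remaining families; it contains \<Y> itself, so the split-off family also lies in it.\<close>

lemma straight_decomposable_covered_by:
  assumes "\<forall>X\<in>\<X>. covered_by d R (Suc k) \<Y> X" and "\<Y> \<subseteq> Pow M"
    and "straight_decomposable M d (\<lambda>i. R (i + Suc k)) \<Y>"
  shows "straight_decomposable M d R \<X>"
  using assms
proof (induction k arbitrary: R \<X>)
  case 0
  have "r_decomposable d (R 1) \<X> \<Y>"
    unfolding r_decomposable_def
  proof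
    fix X assume "X \<in> \<X>"
    with "0.prems"(1) obtain \<U> Z where "\<U> \<subseteq> \<Y>" "r_disjoint d (R 1) \<U>"
      and "covered_by d (\<lambda>i. R (Suc i)) 0 \<Y> Z" and "X = \<Union>\<U> \<union> Z"
      by (metis covered_by_Suc_split)
    moreover from this(3) have "Z = {}" by (simp add: covered_by_def)
    ultimately show "\<exists>X0 X1. X = X0 \<union> X1 \<and>
        (\<exists>\<U>\<subseteq>\<Y>. r_disjoint d (R 1) \<U> \<and> X0 = \<Union>\<U>) \<and>
        (\<exists>\<U>\<subseteq>\<Y>. r_disjoint d (R 1) \<U> \<and> X1 = \<Union>\<U>)"
      by blast
  qed
  moreover have "\<X> \<subseteq> Pow M" using "0.prems"(1,2) covered_by_Pow by blast
  moreover have "straight_decomposable M d (\<lambda>i. R (Suc i)) \<Y>" using "0.prems"(3) by simp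
  ultimately show ?case by (rule straight_decomposable_Cons)
next
  case (Suc k)
  define \<X>' where "\<X>' = {Z. covered_by d (\<lambda>i. R (Suc i)) (Suc k) \<Y> Z}"
  have "r_decomposable d (R 1) \<X> \<X>'"
    unfolding r_decomposable_def
  proof
    fix X assume "X \<in> \<X>"
    with Suc.prems(1) obtain \<U> Z where \<U>: "\<U> \<subseteq> \<Y>" "r_disjoint d (R 1) \<U>"
      and "covered_by d (\<lambda>i. R (Suc i)) (Suc k) \<Y> Z" and X: "X = \<Union>\<U> \<union> Z"
      by (metis covered_by_Suc_split)
    then have "\<exists>\<V>\<subseteq>\<X>'. r_disjoint d (R 1) \<V> \<and> Z = \<Union>\<V>"
      using r_disjoint_singleton by (intro exI[of _ "{Z}"]) (simp add: \<X>'_def)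
    moreover have "\<exists>\<V>\<subseteq>\<X>'. r_disjoint d (R 1) \<V> \<and> \<Union>\<U> = \<Union>\<V>"
      using \<U> covered_by_member unfolding \<X>'_def by (intro exI[of _ \<U>]) blast
    ultimately show "\<exists>X0 X1. X = X0 \<union> X1 \<and>
        (\<exists>\<U>\<subseteq>\<X>'. r_disjoint d (R 1) \<U> \<and> X0 = \<Union>\<U>) \<and>
        (\<exists>\<U>\<subseteq>\<X>'. r_disjoint d (R 1) \<U> \<and> X1 = \<Union>\<U>)"
      using X by (intro exI[of _ "\<Union>\<U>"] exI[of _ Z] conjI) simp_all
  qed
  moreover have "\<X> \<subseteq> Pow M" using Suc.prems(1,2) covered_by_Pow by blast
  moreover have "straight_decomposable M d (\<lambda>i. R (Suc i)) \<X>'"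
    by (rule Suc.IH) (use Suc.prems(2,3) in \<open>simp_all add: \<X>'_def\<close>)
  ultimately show ?case by (rule straight_decomposable_Cons)
qed

lemma decomp_arrow_covered_by:
  assumes "decomp_arrow d \<X> R \<Y>"
  obtains k where "\<forall>X\<in>\<X>. covered_by d R (Suc k) \<Y> X"
proof -
  from assms obtain k where k: "\<forall>X\<in>\<X>. \<exists>\<U> :: nat \<Rightarrow> 'a set set.
      (\<forall>i\<in>{1..k}. \<U> i \<subseteq> \<Y> \<and> (\<forall>V\<in>\<U> i. V \<subseteq> X) \<and> r_disjoint d (R i) (\<U> i))
      \<and> \<Union>(\<Union>i\<in>{1..k}. \<U> i) = X"
    unfolding decomp_arrow_def by (elim exE) blast
  have "covered_by d R k \<Y> X" if "X \<in> \<X>" for X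
  proof -
    from bspec[OF k that] obtain \<U> :: "nat \<Rightarrow> 'a set set"
      where "\<forall>i\<in>{1..k}. \<U> i \<subseteq> \<Y> \<and> (\<forall>V\<in>\<U> i. V \<subseteq> X) \<and> r_disjoint d (R i) (\<U> i)"
        and "\<Union>(\<Union>i\<in>{1..k}. \<U> i) = X"
      by (elim exE conjE)
    then show ?thesis unfolding covered_by_def by blast
  qed
  then show ?thesis using that covered_by_Suc by blast
qed

lemma APC_straight_decomposable:
  assumes "APC M d \<X>"
  shows "straight_decomposable M d R \<X>"
proof -
  have "\<forall>R. straight_decomposable M d R \<X>"
    using assms
  proof (induction rule: APC.induct)
    case (bounded \<X>)
    then show ?case using straight_decomposable_bounded by blast
  next
    case (step \<X>)
    show ?case
    proof
      fix R
      from step.IH[of R] obtain \<Y> where \<Y>: "\<Y> \<subseteq> Pow M" "decomp_arrow d \<X> R \<Y>"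
        and IH: "\<forall>R'. straight_decomposable M d R' \<Y>"
        by (elim exE conjE) blast
      obtain k where "\<forall>X\<in>\<X>. covered_by d R (Suc k) \<Y> X"
        using \<Y>(2) by (rule decomp_arrow_covered_by)
      then show "straight_decomposable M d R \<X>"
        using \<Y>(1) IH[rule_format] by (rule straight_decomposable_covered_by)
    qed
  qed
  then show ?thesis ..
qed

theorem mainTheorem20:
  fixes M :: "'a set" and d :: "'a \<Rightarrow> 'a \<Rightarrow> real" and X :: "'a set"
  assumes "Metric_space M d"
    and "X \<subseteq> M"
    and "finite_APC_complexity M d X"
  shows "straight_FDC M d {X}"
proof -
  obtain \<X> where "X \<in> \<X>" "APC M d \<X>"
    using assms(3) unfolding finite_APC_complexity_def by blast
  then have "straight_decomposable M d R {X}" for R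
    by (meson APC_straight_decomposable straight_decomposable_subset empty_subsetI insert_subset)
  then show ?thesis unfolding straight_FDC_iff by blast
qed

end
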